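(* Let $\Gamma$ be a regular axis-parallel square grid in the plane whose squares have diameter $1$ (side length $1/\sqrt{2}$), and call the open squares of $\Gamma$ cells. Let $p$ and $q$ be two points lying in different cells $\pi_p$ and $\pi_q$, and let $D(p,q)$ be the closed disk having segment $pq$ as a diameter. Let $X$ be the set of cells consisting of $\pi_p$, $\pi_q$, and all $+$-neighbors of $\pi_p$ and of $\pi_q$. 1. If $|pq|\le 1$, then $D(p,q)$ does not intersect any cell outside the neighborhoods of $\pi_p$ and $\pi_q$. 2. If $|pq|\le 1$, then $D(p,q)$ intersects at most two cells that are not in $X$. 3. If $|pq|\le 1/\sqrt{2}$, then $D(p,q)$ does not intersect any cell that is not in $X$.
   Context: The neighbors of a cell $\pi$ are the eight cells that share a side or a corner with $\pi$; the $+$-neighbors of $\pi$ are the four cells sharing a side with $\pi$. The neighborhood of $\pi$ consists of $\pi$ together with its eight neighbors. Cells are open (they do not contain their boundary), and disks are closed. *)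

theory Defs
  imports "HOL-Analysis.Analysis"
begin

text \<open>Points of the plane are elements of real \<times> real; the product metric on
  real \<times> real is the Euclidean metric.\<close>

definition cell :: "real \<times> real \<Rightarrow> int \<times> int \<Rightarrow> (real \<times> real) set" where
  "cell o' c = {z. fst o' + real_of_int (fst c) / sqrt 2 < fst z
                  \<and> fst z < fst o' + real_of_int (fst c + 1) / sqrt 2
                  \<and> snd o' + real_of_int (snd c) / sqrt 2 < snd z
                  \<and> snd z < snd o' + real_of_int (snd c + 1) / sqrt 2}"

definition is_neighbor :: "int \<times> int \<Rightarrow> int \<times> int \<Rightarrow> bool" where
  "is_neighbor c d \<longleftrightarrow> d \<noteq> c \<and> \<bar>fst d - fst c\<bar> \<le> 1 \<and> \<bar>snd d - snd c\<bar> \<le> 1"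

definition is_plus_neighbor :: "int \<times> int \<Rightarrow> int \<times> int \<Rightarrow> bool" where
  "is_plus_neighbor c d \<longleftrightarrow> \<bar>fst d - fst c\<bar> + \<bar>snd d - snd c\<bar> = 1"

definition neighborhood :: "int \<times> int \<Rightarrow> (int \<times> int) set" where
  "neighborhood c = {c} \<union> {d. is_neighbor c d}"

definition diam_disk :: "real \<times> real \<Rightarrow> real \<times> real \<Rightarrow> (real \<times> real) set" where
  "diam_disk p q = cball ((1/2) *\<^sub>R (p + q)) (dist p q / 2)"

end

theory Submission
  imports Defs
begin

text \<open>Every point z of D(p,q) satisfies |zp|^2 + |zq|^2 \<le> |pq|^2. Points of two cells
  whose indices differ by k \<ge> 2 in one coordinate are more than (k - 1)/sqrt 2 apart in that
  coordinate. Hence |pq| \<le> 1 (resp. 1/sqrt 2) bounds the index differences between the cells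
  meeting the disk and the cells of p and q, and the three claims reduce to finite statements
  about integer index pairs.\<close>

lemma parallelogram_law:
  fixes u v :: "'a::real_inner"
  shows "(norm (u - v))\<^sup>2 + (norm (u + v))\<^sup>2 = 2 * (norm u)\<^sup>2 + 2 * (norm v)\<^sup>2"
  by (simp add: power2_norm_eq_inner inner_diff inner_add inner_commute)

lemma Thales_dist_square_sum_le:
  fixes p q z :: "'a::real_inner"
  assumes "z \<in> cball ((1/2) *\<^sub>R (p + q)) (dist p q / 2)"
  shows "(dist z p)\<^sup>2 + (dist z q)\<^sup>2 \<le> (dist p q)\<^sup>2"
proof -
  define u where "u = z - (1/2) *\<^sub>R (p + q)"
  define v where "v = (1/2) *\<^sub>R (p - q)"
  have u: "norm u \<le> dist p q / 2"
    using assms by (simp add: u_def dist_norm norm_minus_commute)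
  have v: "norm v = dist p q / 2"
    by (simp add: v_def dist_norm)
  have "z - p = u - v" "z - q = u + v"
    by (simp_all add: u_def v_def algebra_simps flip: scaleR_add_left)
  then have "(dist z p)\<^sup>2 + (dist z q)\<^sup>2 = 2 * (norm u)\<^sup>2 + 2 * (norm v)\<^sup>2"
    using parallelogram_law[of u v] by (simp add: dist_norm)
  also have "\<dots> \<le> 2 * (dist p q / 2)\<^sup>2 + 2 * (dist p q / 2)\<^sup>2"
    unfolding v using power_mono[OF u norm_ge_zero, of 2] by linarith
  also have "\<dots> = (dist p q)\<^sup>2"
    by (simp add: power_divide)
  finally show ?thesis .
qed

lemma dist_le_diameter_cball:
  fixes x y :: "'a::metric_space"
  assumes "x \<in> cball c r" "y \<in> cball c r"
  shows "dist x y \<le> 2 * r"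
  using assms dist_triangle2[of x y c] by (simp add: dist_commute)

lemma power2_dist_prod: "(dist z w)\<^sup>2 = (fst z - fst w)\<^sup>2 + (snd z - snd w)\<^sup>2"
  by (cases z, cases w) (simp add: dist_Pair_Pair dist_real_def)

definition strips_between :: "int \<Rightarrow> int \<Rightarrow> int" where
  "strips_between a b = max 0 (\<bar>a - b\<bar> - 1)"

text \<open>Twice the squared distance between the closures of the cells c and d.\<close>
definition cell_gap :: "int \<times> int \<Rightarrow> int \<times> int \<Rightarrow> int" where
  "cell_gap c d = (strips_between (fst c) (fst d))\<^sup>2 + (strips_between (snd c) (snd d))\<^sup>2"

lemma strip_separation:
  fixes s x y :: real and a b :: int
  assumes "s + a / sqrt 2 < x" "x < s + (a + 1) / sqrt 2"
    and "s + b / sqrt 2 < y" "y < s + (b + 1) / sqrt 2"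
  shows "strips_between a b = 0 \<or> real_of_int ((strips_between a b)\<^sup>2) < 2 * (x - y)\<^sup>2"
proof (cases "\<bar>a - b\<bar> \<le> 1")
  case True
  then show ?thesis by (simp add: strips_between_def)
next
  case False
  have "real_of_int a / sqrt 2 - (b + 1) / sqrt 2 < x - y"
    and "real_of_int b / sqrt 2 - (a + 1) / sqrt 2 < y - x"
    using assms by linarith+
  then have "(\<bar>a - b\<bar> - 1) / sqrt 2 < \<bar>x - y\<bar>"
    by (auto simp: abs_if diff_divide_distrib[symmetric] algebra_simps split: if_splits)
  then have "((\<bar>a - b\<bar> - 1) / sqrt 2)\<^sup>2 < \<bar>x - y\<bar>\<^sup>2"
    using False by (intro power_strict_mono) auto
  then show ?thesis
    using False by (simp add: strips_between_def power_divide)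
qed

lemma cell_gap_nonneg: "0 \<le> cell_gap c d"
  by (simp add: cell_gap_def)

lemma cell_gap_lt_dist:
  assumes "w \<in> cell o' c" "w' \<in> cell o' c'"
  shows "cell_gap c c' = 0 \<or> real_of_int (cell_gap c c') < 2 * (dist w w')\<^sup>2"
proof -
  let ?m1 = "strips_between (fst c) (fst c')" and ?m2 = "strips_between (snd c) (snd c')"
  have m1: "?m1 = 0 \<or> real_of_int (?m1\<^sup>2) < 2 * (fst w - fst w')\<^sup>2"
    and m2: "?m2 = 0 \<or> real_of_int (?m2\<^sup>2) < 2 * (snd w - snd w')\<^sup>2"
    using assms strip_separation[of "fst o'" "fst c" "fst w" "fst c'" "fst w'"]
      strip_separation[of "snd o'" "snd c" "snd w" "snd c'" "snd w'"]
    by (simp_all add: cell_def)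
  show ?thesis
  proof (cases "?m1 = 0 \<and> ?m2 = 0")
    case True
    then show ?thesis by (simp add: cell_gap_def)
  next
    case False
    have "real_of_int (?m1\<^sup>2) + real_of_int (?m2\<^sup>2)
        < 2 * (fst w - fst w')\<^sup>2 + 2 * (snd w - snd w')\<^sup>2"
      using m1 m2 False by (auto intro: add_less_le_mono add_le_less_mono add_strict_mono)
    then show ?thesis
      by (simp add: cell_gap_def power2_dist_prod)
  qed
qed

lemma diam_disk_cell_gap_lt:
  assumes "p \<in> cell o' cp" "q \<in> cell o' cq" "z \<in> cell o' c" "z \<in> diam_disk p q"
  shows "cell_gap c cp + cell_gap c cq = 0
    \<or> real_of_int (cell_gap c cp + cell_gap c cq) < 2 * (dist p q)\<^sup>2"
proof (cases "cell_gap c cp = 0 \<and> cell_gap c cq = 0")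
  case False
  have "(dist z p)\<^sup>2 + (dist z q)\<^sup>2 \<le> (dist p q)\<^sup>2"
    using assms(4) unfolding diam_disk_def by (rule Thales_dist_square_sum_le)
  moreover have "real_of_int (cell_gap c cp) \<le> 2 * (dist z p)\<^sup>2"
    and "real_of_int (cell_gap c cq) \<le> 2 * (dist z q)\<^sup>2"
    and "real_of_int (cell_gap c cp) < 2 * (dist z p)\<^sup>2
      \<or> real_of_int (cell_gap c cq) < 2 * (dist z q)\<^sup>2"
    using False cell_gap_lt_dist[OF assms(3,1)] cell_gap_lt_dist[OF assms(3,2)] by auto
  ultimately show ?thesis by auto
qed simp

lemma int_bounds_of_lt_twice_square:
  fixes n :: int and d :: real
  assumes "n = 0 \<or> real_of_int n < 2 * d\<^sup>2" "0 \<le> d"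
  shows "d \<le> 1 \<Longrightarrow> n \<le> 1" and "d \<le> 1 / sqrt 2 \<Longrightarrow> n \<le> 0"
proof -
  assume "d \<le> 1"
  then have "d\<^sup>2 \<le> 1" using assms(2) by (simp add: power_le_one)
  then show "n \<le> 1" using assms(1) by auto
next
  assume "d \<le> 1 / sqrt 2"
  then have "d\<^sup>2 \<le> (1 / sqrt 2)\<^sup>2" using assms(2) by (simp add: power_mono)
  then have "2 * d\<^sup>2 \<le> 1" by (simp add: power_divide)
  then show "n \<le> 0" using assms(1) by auto
qed

lemma cell_gap_le_1:
  assumes "w \<in> cell o' c" "w' \<in> cell o' c'" "dist w w' \<le> 1"
  shows "cell_gap c c' \<le> 1"
  using int_bounds_of_lt_twice_square(1)[OF cell_gap_lt_dist[OF assms(1,2)]] assms(3) by simp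

lemma cell_gap_eq_0:
  assumes "w \<in> cell o' c" "w' \<in> cell o' c'" "dist w w' \<le> 1 / sqrt 2"
  shows "cell_gap c c' = 0"
  using int_bounds_of_lt_twice_square(2)[OF cell_gap_lt_dist[OF assms(1,2)]] assms(3)
    cell_gap_nonneg[of c c'] by simp

lemma diam_disk_cell_gap_le_1:
  assumes "p \<in> cell o' cp" "q \<in> cell o' cq" "z \<in> cell o' c" "z \<in> diam_disk p q"
    and "dist p q \<le> 1"
  shows "cell_gap c cp + cell_gap c cq \<le> 1"
  using int_bounds_of_lt_twice_square(1)[OF diam_disk_cell_gap_lt[OF assms(1-4)]] assms(5)
  by simp

lemma diam_disk_cell_gap_eq_0:
  assumes "p \<in> cell o' cp" "q \<in> cell o' cq" "z \<in> cell o' c" "z \<in> diam_disk p q"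
    and "dist p q \<le> 1 / sqrt 2"
  shows "cell_gap c cp = 0" "cell_gap c cq = 0"
  using int_bounds_of_lt_twice_square(2)[OF diam_disk_cell_gap_lt[OF assms(1-4)]] assms(5)
    cell_gap_nonneg[of c cp] cell_gap_nonneg[of c cq] by simp_all

lemma cell_gap_eq_0_iff:
  "cell_gap c d = 0 \<longleftrightarrow> \<bar>fst c - fst d\<bar> \<le> 1 \<and> \<bar>snd c - snd d\<bar> \<le> 1"
  by (auto simp: cell_gap_def strips_between_def)

lemma cell_gap_eq_0_iff_neighborhood: "cell_gap c d = 0 \<longleftrightarrow> c \<in> neighborhood d"
  by (auto simp: cell_gap_eq_0_iff neighborhood_def is_neighbor_def abs_minus_commute)

lemma cell_gap_le_1_iff:
  "cell_gap c d \<le> 1 \<longleftrightarrow> \<bar>fst c - fst d\<bar> \<le> 2 \<and> \<bar>snd c - snd d\<bar> \<le> 2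
     \<and> (\<bar>fst c - fst d\<bar> \<le> 1 \<or> \<bar>snd c - snd d\<bar> \<le> 1)"
proof -
  have "m\<^sup>2 \<le> 1 \<longleftrightarrow> m \<le> 1" "m\<^sup>2 = 0 \<longleftrightarrow> m = 0" if "0 \<le> m" for m :: int
    using that power2_le_iff_abs_le[of 1 m] by auto
  then show ?thesis
    unfolding cell_gap_def strips_between_def
    by (smt (verit) zero_le_power2)
qed

lemma finite_neighborhood: "finite (neighborhood c)"
proof (rule finite_subset)
  show "neighborhood c \<subseteq> {fst c - 1..fst c + 1} \<times> {snd c - 1..snd c + 1}"
    by (auto simp: neighborhood_def is_neighbor_def mem_Times_iff abs_le_iff)
qed simp

text \<open>A diagonal neighbor of both cp and cq would make both coordinates of cp - cq even,
  hence zero.\<close>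
lemma common_neighbor_is_plus_neighbor:
  assumes "cq \<in> neighborhood cp" "cp \<noteq> cq" "c \<in> neighborhood cp" "c \<in> neighborhood cq"
  shows "c \<in> {cp, cq} \<or> is_plus_neighbor cp c \<or> is_plus_neighbor cq c"
  using assms unfolding neighborhood_def is_neighbor_def is_plus_neighbor_def prod_eq_iff
    Un_iff mem_Collect_eq singleton_iff insert_iff empty_iff
  by (smt (z3))

lemma card_le_2_if_no_three_distinct:
  assumes "\<And>x y z. x \<in> S \<Longrightarrow> y \<in> S \<Longrightarrow> z \<in> S \<Longrightarrow> x = y \<or> x = z \<or> y = z"
  shows "card S \<le> 2"
proof (rule ccontr)
  assume "\<not> card S \<le> 2"
  then obtain T where "T \<subseteq> S" "card T = 3"
    using obtain_subset_with_card_n[of 3 S] by auto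
  then obtain x y z where "{x, y, z} \<subseteq> S" "x \<noteq> y" "x \<noteq> z" "y \<noteq> z"
    by (auto simp: card_3_iff)
  then show False
    using assms[of x y z] by simp
qed

text \<open>Each such cell is a diagonal neighbor of one of cp, cq and has gap at most 1 to the
  other; for each position of cq relative to cp there are at most four candidates, and no
  three of them are pairwise within gap 1.\<close>
lemma at_most_two_far_cells:
  assumes "cp \<noteq> cq" "cell_gap cp cq \<le> 1"
    and near: "\<And>c. c \<in> S \<Longrightarrow> cell_gap c cp + cell_gap c cq \<le> 1"
    and far: "S \<inter> ({cp, cq} \<union> {d. is_plus_neighbor cp d} \<union> {d. is_plus_neighbor cq d}) = {}"
    and close: "\<And>c d. c \<in> S \<Longrightarrow> d \<in> S \<Longrightarrow> cell_gap c d \<le> 1"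
  shows "card S \<le> 2"
proof (rule card_le_2_if_no_three_distinct)
  have sum: "cell_gap c cp + cell_gap c cq \<le> 1 \<longleftrightarrow>
      (cell_gap c cp = 0 \<and> cell_gap c cq \<le> 1) \<or> (cell_gap c cq = 0 \<and> cell_gap c cp \<le> 1)" for c
    using cell_gap_nonneg[of c cp] cell_gap_nonneg[of c cq] by linarith
  have outside: "c \<noteq> cp \<and> c \<noteq> cq \<and> \<not> is_plus_neighbor cp c \<and> \<not> is_plus_neighbor cq c"
    if "c \<in> S" for c
    using that far by blast
  fix c1 c2 c3
  assume "c1 \<in> S" "c2 \<in> S" "c3 \<in> S"
  with assms(1,2) near[of c1] near[of c2] near[of c3] outside[of c1] outside[of c2] outside[of c3]
    close[of c1 c2] close[of c1 c3] close[of c2 c3]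
  show "c1 = c2 \<or> c1 = c3 \<or> c2 = c3"
    unfolding sum cell_gap_eq_0_iff cell_gap_le_1_iff is_plus_neighbor_def prod_eq_iff
    by (smt (z3))
qed

lemma diam_disk_meets_only_neighborhoods:
  assumes "p \<in> cell o' cp" "q \<in> cell o' cq" "dist p q \<le> 1"
    and "z \<in> cell o' c" "z \<in> diam_disk p q"
  shows "c \<in> neighborhood cp \<union> neighborhood cq"
proof -
  have "cell_gap c cp + cell_gap c cq \<le> 1"
    using diam_disk_cell_gap_le_1[OF assms(1,2,4,5,3)] .
  then have "cell_gap c cp = 0 \<or> cell_gap c cq = 0"
    using cell_gap_nonneg[of c cp] cell_gap_nonneg[of c cq] by linarith
  then show ?thesis
    by (auto simp: cell_gap_eq_0_iff_neighborhood)
qed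

lemma diam_disk_cells_gap_le_1:
  assumes "dist p q \<le> 1" "z \<in> cell o' c" "z \<in> diam_disk p q" "z' \<in> cell o' d" "z' \<in> diam_disk p q"
  shows "cell_gap c d \<le> 1"
proof (rule cell_gap_le_1[OF assms(2,4)])
  show "dist z z' \<le> 1"
    using dist_le_diameter_cball[of z _ "dist p q / 2" z'] assms(1,3,5)
    unfolding diam_disk_def by fastforce
qed

lemma small_diam_disk_meets_only_plus_neighbors:
  assumes "p \<in> cell o' cp" "q \<in> cell o' cq" "cp \<noteq> cq" "dist p q \<le> 1 / sqrt 2"
    and "z \<in> cell o' c" "z \<in> diam_disk p q"
  shows "c \<in> {cp, cq} \<or> is_plus_neighbor cp c \<or> is_plus_neighbor cq c"
proof (rule common_neighbor_is_plus_neighbor[OF _ assms(3)])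
  show "cq \<in> neighborhood cp"
    using cell_gap_eq_0[OF assms(2,1)] assms(4)
    by (simp add: dist_commute cell_gap_eq_0_iff_neighborhood)
  show "c \<in> neighborhood cp" "c \<in> neighborhood cq"
    using diam_disk_cell_gap_eq_0[OF assms(1,2,5,6,4)]
    by (simp_all add: cell_gap_eq_0_iff_neighborhood)
qed

theorem lemma5:
  fixes o' p q :: "real \<times> real" and cp cq :: "int \<times> int"
  assumes "p \<in> cell o' cp" and "q \<in> cell o' cq" and "cp \<noteq> cq"
  defines "X \<equiv> {cp, cq} \<union> {d. is_plus_neighbor cp d} \<union> {d. is_plus_neighbor cq d}"
  shows "(dist p q \<le> 1 \<longrightarrow>
            (\<forall>c. c \<notin> neighborhood cp \<union> neighborhood cq \<longrightarrow> cell o' c \<inter> diam_disk p q = {}))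
       \<and> (dist p q \<le> 1 \<longrightarrow>
            finite {c. c \<notin> X \<and> cell o' c \<inter> diam_disk p q \<noteq> {}}
            \<and> card {c. c \<notin> X \<and> cell o' c \<inter> diam_disk p q \<noteq> {}} \<le> 2)
       \<and> (dist p q \<le> 1 / sqrt 2 \<longrightarrow>
            (\<forall>c. c \<notin> X \<longrightarrow> cell o' c \<inter> diam_disk p q = {}))"
proof (intro conjI impI allI)
  assume d: "dist p q \<le> 1"
  let ?S = "{c. c \<notin> X \<and> cell o' c \<inter> diam_disk p q \<noteq> {}}"
  have meets: "{c. cell o' c \<inter> diam_disk p q \<noteq> {}} \<subseteq> neighborhood cp \<union> neighborhood cq"
    using diam_disk_meets_only_neighborhoods[OF assms(1,2) d] by blast
  then show "cell o' c \<inter> diam_disk p q = {}" if "c \<notin> neighborhood cp \<union> neighborhood cq" for c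
    using that by blast
  have "?S \<subseteq> neighborhood cp \<union> neighborhood cq"
    using meets by blast
  then show "finite ?S"
    using finite_neighborhood by (meson finite_UnI finite_subset)
  show "card ?S \<le> 2"
  proof (rule at_most_two_far_cells[OF assms(3) cell_gap_le_1[OF assms(1,2) d]])
    show "cell_gap c cp + cell_gap c cq \<le> 1" if "c \<in> ?S" for c
      using that diam_disk_cell_gap_le_1[OF assms(1,2) _ _ d] by blast
    show "cell_gap c c' \<le> 1" if "c \<in> ?S" "c' \<in> ?S" for c c'
      using that diam_disk_cells_gap_le_1[OF d] by blast
    show "?S \<inter> ({cp, cq} \<union> {d. is_plus_neighbor cp d} \<union> {d. is_plus_neighbor cq d}) = {}"
      unfolding X_def by blast
  qed
next
  fix c assume "dist p q \<le> 1 / sqrt 2" "c \<notin> X"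
  then show "cell o' c \<inter> diam_disk p q = {}"
    using small_diam_disk_meets_only_plus_neighbors[OF assms(1-3)] unfolding X_def by blast
qed

end
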